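(* Let $\kappa_0=(\xi_0,\eta_0),\kappa_1=(\xi_1,\eta_1)\in S\mathbb{H}$. Then $\phi_1(\kappa_0)=\phi_1(\kappa_1)$ if and only if $\kappa_0=\kappa_1\alpha$ for some $\alpha\in\mathbb{H}$ with $|\alpha|=1$.
   Context: For $q=a+bi+cj+dk\in\mathbb{H}$, $\bar q=a-bi-cj-dk$. $\mathcal{V}=\mathrm{span}_\mathbb{R}\{1,i,j\}$. $S\mathbb{H}=\{(\xi,\eta)\in\mathbb{H}^2\setminus\{(0,0)\}:\xi\bar\eta\in\mathcal{V}\}$; $(\xi,\eta)\alpha=(\xi\alpha,\eta\alpha)$. The map $\phi_1$ sends $\kappa$ (a column) to the $2\times2$ quaternionic matrix $\kappa\bar\kappa^T=\begin{pmatrix}|\xi|^2&\xi\bar\eta\\ \eta\bar\xi&|\eta|^2\end{pmatrix}$. *)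

theory Defs
  imports Complex_Main
begin

datatype quat = Quat (qre: real) (qi: real) (qj: real) (qk: real)

definition qzero :: quat where "qzero = Quat 0 0 0 0"

definition qmult :: "quat \<Rightarrow> quat \<Rightarrow> quat" (infixl "\<cdot>\<^sub>q" 70) where
  "p \<cdot>\<^sub>q q = Quat
     (qre p * qre q - qi p * qi q - qj p * qj q - qk p * qk q)
     (qre p * qi q + qi p * qre q + qj p * qk q - qk p * qj q)
     (qre p * qj q - qi p * qk q + qj p * qre q + qk p * qi q)
     (qre p * qk q + qi p * qj q - qj p * qi q + qk p * qre q)"

definition qcnj :: "quat \<Rightarrow> quat" where
  "qcnj q = Quat (qre q) (- qi q) (- qj q) (- qk q)"

definition qnorm :: "quat \<Rightarrow> real" where
  "qnorm q = sqrt ((qre q)\<^sup>2 + (qi q)\<^sup>2 + (qj q)\<^sup>2 + (qk q)\<^sup>2)"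

definition qV :: "quat set" where
  "qV = {q. qk q = 0}"

definition SH :: "(quat \<times> quat) set" where
  "SH = {(\<xi>, \<eta>). (\<xi>, \<eta>) \<noteq> (qzero, qzero) \<and> \<xi> \<cdot>\<^sub>q qcnj \<eta> \<in> qV}"

definition ract :: "quat \<times> quat \<Rightarrow> quat \<Rightarrow> quat \<times> quat" where
  "ract \<kappa> \<alpha> = (fst \<kappa> \<cdot>\<^sub>q \<alpha>, snd \<kappa> \<cdot>\<^sub>q \<alpha>)"

text \<open>phi_1(kappa) = kappa * conj(kappa)^T, a 2x2 quaternionic matrix, represented
  as the pair of its rows ((m11, m12), (m21, m22)).\<close>
definition phi1 :: "quat \<times> quat \<Rightarrow> (quat \<times> quat) \<times> (quat \<times> quat)" where
  "phi1 \<kappa> = (case \<kappa> of (\<xi>, \<eta>) \<Rightarrow>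
     ((\<xi> \<cdot>\<^sub>q qcnj \<xi>, \<xi> \<cdot>\<^sub>q qcnj \<eta>), (\<eta> \<cdot>\<^sub>q qcnj \<xi>, \<eta> \<cdot>\<^sub>q qcnj \<eta>)))"

end

theory Submission
  imports Defs
begin

text \<open>The Gram entries \<open>\<xi> conj \<xi>\<close> and \<open>\<eta> conj \<xi>\<close> of \<open>\<phi>\<^sub>1 \<kappa>\<close> determine \<open>\<kappa>\<close> up to a unit
  right factor: if \<open>\<xi>\<^sub>1 \<noteq> 0\<close>, equality of \<open>|\<xi>|\<close> gives \<open>\<xi>\<^sub>0 = \<xi>\<^sub>1 \<alpha>\<close> with
  \<open>\<alpha> = conj \<xi>\<^sub>1 \<xi>\<^sub>0 / |\<xi>\<^sub>1|\<^sup>2\<close> a unit, and then \<open>\<eta>\<^sub>1 conj \<xi>\<^sub>1 = \<eta>\<^sub>0 conj \<alpha> conj \<xi>\<^sub>1\<close>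
  yields \<open>\<eta>\<^sub>0 = \<eta>\<^sub>1 \<alpha>\<close> after cancelling \<open>conj \<xi>\<^sub>1\<close>. Conversely a unit \<open>\<alpha>\<close> cancels in
  \<open>(x \<alpha>) conj (y \<alpha>) = x \<alpha> conj \<alpha> conj y\<close>.\<close>

definition qreal :: "real \<Rightarrow> quat" where
  "qreal r = Quat r 0 0 0"

lemma qmult_assoc: "(p \<cdot>\<^sub>q q) \<cdot>\<^sub>q r = p \<cdot>\<^sub>q (q \<cdot>\<^sub>q r)"
  by (simp add: qmult_def algebra_simps)

lemma qcnj_qmult: "qcnj (p \<cdot>\<^sub>q q) = qcnj q \<cdot>\<^sub>q qcnj p"
  by (simp add: qmult_def qcnj_def algebra_simps)

lemma qreal_qmult_qreal [simp]: "qreal a \<cdot>\<^sub>q qreal b = qreal (a * b)"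
  by (simp add: qmult_def qreal_def)

lemma qreal_one_qmult [simp]: "qreal 1 \<cdot>\<^sub>q p = p"
  by (simp add: qmult_def qreal_def)

lemma qmult_qreal_one [simp]: "p \<cdot>\<^sub>q qreal 1 = p"
  by (simp add: qmult_def qreal_def)

lemma qmult_qreal_commute: "p \<cdot>\<^sub>q qreal r = qreal r \<cdot>\<^sub>q p"
  by (simp add: qmult_def qreal_def algebra_simps)

lemma qnorm_qmult: "qnorm (p \<cdot>\<^sub>q q) = qnorm p * qnorm q"
  unfolding qnorm_def real_sqrt_mult [symmetric]
  by (rule arg_cong [where f = sqrt]) (simp add: qmult_def power2_eq_square algebra_simps)

lemma qnorm_qcnj: "qnorm (qcnj p) = qnorm p"
  by (simp add: qnorm_def qcnj_def)

lemma qnorm_qreal: "qnorm (qreal r) = \<bar>r\<bar>"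
  by (simp add: qnorm_def qreal_def)

lemma qnorm_ge_zero: "qnorm p \<ge> 0"
  by (simp add: qnorm_def)

lemma qnorm_eq_0_iff: "qnorm p = 0 \<longleftrightarrow> p = qzero"
  by (cases p) (simp add: qnorm_def qzero_def add_nonneg_eq_0_iff)

lemma qmult_qcnj_self: "p \<cdot>\<^sub>q qcnj p = qreal ((qnorm p)\<^sup>2)"
  by (simp add: qmult_def qcnj_def qreal_def qnorm_def power2_eq_square algebra_simps)

lemma qcnj_qmult_self: "qcnj p \<cdot>\<^sub>q p = qreal ((qnorm p)\<^sup>2)"
  by (simp add: qmult_def qcnj_def qreal_def qnorm_def power2_eq_square algebra_simps)

lemma qmult_scale_cancel:
  assumes "r \<noteq> 0"
  shows "qreal (1 / r) \<cdot>\<^sub>q (qreal r \<cdot>\<^sub>q p) = p"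
  using assms by (simp flip: qmult_assoc)

lemma qmult_right_cancel:
  assumes "x \<noteq> qzero" and "p \<cdot>\<^sub>q x = q \<cdot>\<^sub>q x"
  shows "p = q"
proof -
  define n where "n = (qnorm x)\<^sup>2"
  have "n \<noteq> 0"
    using assms(1) by (simp add: n_def qnorm_eq_0_iff)
  have "qreal n \<cdot>\<^sub>q p = (p \<cdot>\<^sub>q x) \<cdot>\<^sub>q qcnj x"
    by (simp add: n_def qmult_assoc qmult_qcnj_self qmult_qreal_commute)
  also have "\<dots> = qreal n \<cdot>\<^sub>q q"
    by (simp add: assms(2) n_def qmult_assoc qmult_qcnj_self qmult_qreal_commute)
  finally have "qreal n \<cdot>\<^sub>q p = qreal n \<cdot>\<^sub>q q" .
  then show ?thesis
    using qmult_scale_cancel [OF \<open>n \<noteq> 0\<close>] by metis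
qed

lemma qmult_qcnj_unit:
  assumes "qnorm \<alpha> = 1"
  shows "(x \<cdot>\<^sub>q \<alpha>) \<cdot>\<^sub>q qcnj (y \<cdot>\<^sub>q \<alpha>) = x \<cdot>\<^sub>q qcnj y"
proof -
  have "(x \<cdot>\<^sub>q \<alpha>) \<cdot>\<^sub>q qcnj (y \<cdot>\<^sub>q \<alpha>) = x \<cdot>\<^sub>q (\<alpha> \<cdot>\<^sub>q qcnj \<alpha>) \<cdot>\<^sub>q qcnj y"
    by (simp add: qcnj_qmult qmult_assoc)
  then show ?thesis
    using assms by (simp add: qmult_qcnj_self)
qed

lemma unit_right_factor_of_eq_qnorm:
  assumes "qnorm x0 = qnorm x1" and "x1 \<noteq> qzero"
  obtains \<alpha> where "qnorm \<alpha> = 1" and "x0 = x1 \<cdot>\<^sub>q \<alpha>"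
proof
  define n where "n = (qnorm x1)\<^sup>2"
  have "n \<noteq> 0"
    using assms(2) by (simp add: n_def qnorm_eq_0_iff)
  define \<alpha> where "\<alpha> = qreal (1 / n) \<cdot>\<^sub>q (qcnj x1 \<cdot>\<^sub>q x0)"
  show "qnorm \<alpha> = 1"
    using \<open>n \<noteq> 0\<close> assms(1)
    by (simp add: \<alpha>_def n_def qnorm_qmult qnorm_qreal qnorm_qcnj power2_eq_square)
  have "x1 \<cdot>\<^sub>q \<alpha> = qreal (1 / n) \<cdot>\<^sub>q ((x1 \<cdot>\<^sub>q qcnj x1) \<cdot>\<^sub>q x0)"
    by (simp add: \<alpha>_def qmult_assoc qmult_qreal_commute flip: qmult_assoc)
  then show "x0 = x1 \<cdot>\<^sub>q \<alpha>"
    by (simp add: qmult_qcnj_self n_def [symmetric] qmult_scale_cancel [OF \<open>n \<noteq> 0\<close>])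
qed

lemma unit_right_factor_of_eq_gram:
  assumes "x0 \<cdot>\<^sub>q qcnj x0 = x1 \<cdot>\<^sub>q qcnj x1"
    and "y0 \<cdot>\<^sub>q qcnj x0 = y1 \<cdot>\<^sub>q qcnj x1"
    and "x1 \<noteq> qzero"
  shows "\<exists>\<alpha>. qnorm \<alpha> = 1 \<and> x0 = x1 \<cdot>\<^sub>q \<alpha> \<and> y0 = y1 \<cdot>\<^sub>q \<alpha>"
proof -
  have "qnorm x0 = qnorm x1"
    using assms(1) qnorm_ge_zero
    by (simp add: qmult_qcnj_self qreal_def power2_eq_iff_nonneg)
  then obtain \<alpha> where unit: "qnorm \<alpha> = 1" and x0: "x0 = x1 \<cdot>\<^sub>q \<alpha>"
    using assms(3) by (rule unit_right_factor_of_eq_qnorm)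
  have "(y0 \<cdot>\<^sub>q qcnj \<alpha>) \<cdot>\<^sub>q qcnj x1 = y1 \<cdot>\<^sub>q qcnj x1"
    using assms(2) by (simp add: x0 qcnj_qmult qmult_assoc)
  then have "y0 \<cdot>\<^sub>q qcnj \<alpha> = y1"
    by (rule qmult_right_cancel [rotated]) (use assms(3) qnorm_eq_0_iff qnorm_qcnj in metis)
  then have "y0 = y1 \<cdot>\<^sub>q \<alpha>"
    using unit by (auto simp: qmult_assoc qcnj_qmult_self)
  with unit x0 show ?thesis
    by blast
qed

theorem lemma4p4:
  assumes "\<kappa>0 \<in> SH" and "\<kappa>1 \<in> SH"
  shows "phi1 \<kappa>0 = phi1 \<kappa>1 \<longleftrightarrow> (\<exists>\<alpha>. qnorm \<alpha> = 1 \<and> \<kappa>0 = ract \<kappa>1 \<alpha>)"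
proof -
  obtain x0 y0 x1 y1 where \<kappa>: "\<kappa>0 = (x0, y0)" "\<kappa>1 = (x1, y1)"
    by fastforce
  have "(\<exists>\<alpha>. qnorm \<alpha> = 1 \<and> \<kappa>0 = ract \<kappa>1 \<alpha>)" if "phi1 \<kappa>0 = phi1 \<kappa>1"
  proof -
    have gram: "x0 \<cdot>\<^sub>q qcnj x0 = x1 \<cdot>\<^sub>q qcnj x1" "x0 \<cdot>\<^sub>q qcnj y0 = x1 \<cdot>\<^sub>q qcnj y1"
      "y0 \<cdot>\<^sub>q qcnj x0 = y1 \<cdot>\<^sub>q qcnj x1" "y0 \<cdot>\<^sub>q qcnj y0 = y1 \<cdot>\<^sub>q qcnj y1"
      using that by (simp_all add: phi1_def \<kappa>)
    have "x1 \<noteq> qzero \<or> y1 \<noteq> qzero"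
      using assms(2) by (simp add: SH_def \<kappa>)
    then show ?thesis
      using unit_right_factor_of_eq_gram [OF gram(1,3)] unit_right_factor_of_eq_gram [OF gram(4,2)]
      by (auto simp: ract_def \<kappa>)
  qed
  then show ?thesis
    by (auto simp: phi1_def ract_def \<kappa> qmult_qcnj_unit)
qed

end
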